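(* Let $T_1,\dots,T_m$ be a sequence of conjunctions over $\{0,1\}^n$, presented one at a time, each of which is a conjunction of some subset of metafeatures $m_1,\dots,m_k$ satisfying the anchor-variable condition. Then there is an online learner that exactly learns every target in the sequence using only $O(mk+n^3)$ equivalence queries in total.
   Context: A monomial/conjunction of positive variables is identified with its set of variables; a conjunction of a subset of metafeatures is the union of their variable sets. Metafeatures $m_1,\dots,m_k$ satisfy the anchor-variable condition if each $m_i$ contains a variable belonging to no other $m_j$. In the equivalence query model, the learner proposes a hypothesis and either is told it is exactly correct or receives a counterexample; the targets arrive sequentially and the learner may retain information (e.g., learned hypotheses) from earlier targets. *)

theory Defs
  imports Main
begin

(* Instances of {0,1}^n are boolean lists of length n; variable i is x ! i. *)
type_synonym inst = "bool list"
type_synonym hyp = "inst \<Rightarrow> bool"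

definition conj :: "nat set \<Rightarrow> hyp" where
  "conj S x \<longleftrightarrow> (\<forall>i\<in>S. x ! i)"

definition anchor_cond :: "nat \<Rightarrow> (nat \<Rightarrow> nat set) \<Rightarrow> bool" where
  "anchor_cond k M \<longleftrightarrow>
     (\<forall>i<k. \<exists>v\<in>M i. \<forall>j<k. j \<noteq> i \<longrightarrow> v \<notin> M j)"

(* A transcript: Some x = counterexample x received for the current target,
   None = "correct", i.e. the current target has been learned and the next
   target starts. A learner for dimension n maps the transcript so far
   (over all earlier targets and the current one) to its next hypothesis. *)
type_synonym history = "inst option list"
type_synonym learner = "history \<Rightarrow> hyp"

(* Reachable states (remaining targets, transcript, number of equivalence
   queries asked so far), for every possible (adaptive) choice of
   counterexamples by the adversary. *)
inductive eq_run :: "nat \<Rightarrow> learner \<Rightarrow> nat set list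
                      \<Rightarrow> nat set list \<Rightarrow> history \<Rightarrow> nat \<Rightarrow> bool"
  for n :: nat and L :: learner and Ts :: "nat set list" where
  start: "eq_run n L Ts Ts [] 0"
| correct: "\<lbrakk> eq_run n L Ts (T # rest) hs q;
             \<forall>x. length x = n \<longrightarrow> L hs x = conj T x \<rbrakk>
           \<Longrightarrow> eq_run n L Ts rest (hs @ [None]) (Suc q)"
| counterex: "\<lbrakk> eq_run n L Ts (T # rest) hs q;
               length x = n; L hs x \<noteq> conj T x \<rbrakk>
           \<Longrightarrow> eq_run n L Ts (T # rest) (hs @ [Some x]) (Suc q)"

end

theory Submission imports Defs Complex_Main begin

text \<open>The learner is a weighted halving algorithm over experts that guess the metafeatures and
  the index sets of all targets so far. It predicts by weighted majority, so every counterexample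
  removes at least half of the remaining weight. When a target is learned, each surviving expert
  is split into 2^k experts guessing the next index set, each with 2^-k of its weight, so the total
  weight never grows. The true expert survives and has weight 2^-(k(n+1) + (c+1)k) after c
  targets, which bounds the number of counterexamples by k(n+1) + (c+1)k; the anchor variables
  give k \<le> n.\<close>

definition weighted_vote :: "('e \<Rightarrow> real) \<Rightarrow> ('e \<Rightarrow> 'x \<Rightarrow> bool) \<Rightarrow> 'e set \<Rightarrow> 'x \<Rightarrow> bool" where
  "weighted_vote w p S x \<longleftrightarrow> sum w S \<le> 2 * sum w {e\<in>S. p e x}"

lemma sum_disagreeing_weighted_vote_le:
  assumes "finite S"
  shows "sum w {e\<in>S. p e x \<noteq> weighted_vote w p S x} \<le> sum w S / 2"
proof -
  have split: "sum w S = sum w {e\<in>S. p e x} + sum w {e\<in>S. \<not> p e x}"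
    using assms by (subst sum.union_disjoint[symmetric]) (auto intro: sum.cong)
  show ?thesis
  proof (cases "weighted_vote w p S x")
    case True
    then have "{e\<in>S. p e x \<noteq> weighted_vote w p S x} = {e\<in>S. \<not> p e x}" by auto
    with True split show ?thesis unfolding weighted_vote_def by simp
  next
    case False
    then have "{e\<in>S. p e x \<noteq> weighted_vote w p S x} = {e\<in>S. p e x}" by auto
    with False show ?thesis unfolding weighted_vote_def by simp
  qed
qed

text \<open>An expert (k, Ms, Js) guesses k metafeatures Ms and the index sets Js of the targets seen
  so far, the current one first; its weight pays n+1 bits per metafeature and k bits per target.\<close>

type_synonym expert = "nat \<times> nat set list \<times> nat set list"

fun weight :: "nat \<Rightarrow> expert \<Rightarrow> real" where
  "weight n (k, Ms, Js) = (1/2) ^ (k * (n + 1) + length Js * k)"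

fun target :: "expert \<Rightarrow> nat set" where
  "target (k, Ms, Js) = (\<Union>j\<in>hd Js. Ms ! j)"

lemma weight_nonneg: "0 \<le> weight n e"
  by (cases e) simp

lemma sum_weight_mono: "finite S \<Longrightarrow> T \<subseteq> S \<Longrightarrow> sum (weight n) T \<le> sum (weight n) S"
  by (rule sum_mono2) (auto simp: weight_nonneg)

definition extend :: "expert set \<Rightarrow> expert set" where
  "extend S = {(k, Ms, J # Js) | k Ms Js J. (k, Ms, Js) \<in> S \<and> J \<subseteq> {..<k}}"

lemma extend_eq_image:
  "extend S = (\<lambda>((k, Ms, Js), J). (k, Ms, J # Js)) ` (SIGMA e:S. Pow {..<fst e})"
  unfolding extend_def by force

lemma finite_extend: "finite S \<Longrightarrow> finite (extend S)"
  unfolding extend_eq_image by auto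

lemma sum_weight_extend:
  assumes "finite S"
  shows "sum (weight n) (extend S) = sum (weight n) S"
proof -
  let ?f = "\<lambda>((k, Ms, Js), J). (k, Ms, J # Js) :: expert"
  have "inj_on ?f (SIGMA e:S. Pow {..<fst e})"
    by (auto simp: inj_on_def)
  then have "sum (weight n) (extend S) = (\<Sum>p\<in>(SIGMA e:S. Pow {..<fst e}). weight n (?f p))"
    unfolding extend_eq_image by (simp add: sum.reindex)
  also have "\<dots> = (\<Sum>e\<in>S. \<Sum>J\<in>Pow {..<fst e}. weight n (?f (e, J)))"
    using assms by (subst sum.Sigma) (auto simp: case_prod_unfold)
  also have "\<dots> = sum (weight n) S"
  proof (rule sum.cong[OF refl])
    fix e :: expert
    obtain k Ms Js where e: "e = (k, Ms, Js)" by (cases e)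
    have "(\<Sum>J\<in>Pow {..<fst e}. weight n (?f (e, J))) = 2 ^ k * (weight n e * (1/2) ^ k)"
      by (simp add: e card_Pow power_add)
    also have "\<dots> = weight n e"
      by (simp add: power_one_over)
    finally show "(\<Sum>J\<in>Pow {..<fst e}. weight n (?f (e, J))) = weight n e" .
  qed
  finally show ?thesis .
qed

definition initial_guesses :: "nat \<Rightarrow> expert set" where
  "initial_guesses n = {(k, Ms, []) | k Ms. 1 \<le> k \<and> k \<le> n \<and> length Ms = k \<and> set Ms \<subseteq> Pow {..<n}}"

lemma initial_guesses_eq_image:
  "initial_guesses n = (\<lambda>(k, Ms). (k, Ms, [])) `
     (SIGMA k:{1..n}. {Ms. set Ms \<subseteq> Pow {..<n} \<and> length Ms = k})"
  unfolding initial_guesses_def by force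

lemma finite_initial_guesses: "finite (initial_guesses n)"
  unfolding initial_guesses_eq_image by (auto intro: finite_lists_length_eq)

lemma sum_weight_initial_guesses: "sum (weight n) (initial_guesses n) \<le> 1"
proof -
  let ?L = "\<lambda>k. {Ms. set Ms \<subseteq> Pow {..<n} \<and> length Ms = k}"
  have fin: "finite (?L k)" for k
    by (rule finite_lists_length_eq) simp
  have "inj_on (\<lambda>(k, Ms). (k, Ms, [] :: nat set list)) (SIGMA k:{1..n}. ?L k)"
    by (auto simp: inj_on_def)
  then have "sum (weight n) (initial_guesses n) = (\<Sum>(k, Ms)\<in>(SIGMA k:{1..n}. ?L k). (1/2) ^ (k * (n + 1)))"
    unfolding initial_guesses_eq_image by (simp add: sum.reindex case_prod_unfold)
  also have "\<dots> = (\<Sum>k=1..n. \<Sum>Ms\<in>?L k. (1/2) ^ (k * (n + 1)))"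
    using fin by (subst sum.Sigma) auto
  also have "\<dots> = (\<Sum>k=1..n. (1/2) ^ k)"
  proof (rule sum.cong[OF refl])
    fix k
    have "card (?L k) = (2 ^ n) ^ k"
      by (simp add: card_lists_length_eq card_Pow)
    then have "(\<Sum>Ms\<in>?L k. (1/2::real) ^ (k * (n + 1))) = 2 ^ (n * k) * ((1/2) ^ (n * k) * (1/2) ^ k)"
      by (simp add: power_mult[symmetric] power_add algebra_simps)
    also have "\<dots> = (1/2) ^ k"
      by (simp add: power_one_over)
    finally show "(\<Sum>Ms\<in>?L k. (1/2::real) ^ (k * (n + 1))) = (1/2) ^ k" .
  qed
  also have "\<dots> = 1 - (1/2) ^ n"
    by (induction n) (auto simp: field_simps)
  finally show ?thesis by simp
qed

abbreviation vote :: "nat \<Rightarrow> expert set \<Rightarrow> hyp" where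
  "vote n \<equiv> weighted_vote (weight n) (\<lambda>e. conj (target e))"

fun update :: "nat \<Rightarrow> expert set \<Rightarrow> inst option \<Rightarrow> expert set" where
  "update n S (Some x) = {e\<in>S. conj (target e) x \<noteq> vote n S x}"
| "update n S None = extend {e\<in>S. \<forall>x. length x = n \<longrightarrow> conj (target e) x = vote n S x}"

definition version_space :: "nat \<Rightarrow> history \<Rightarrow> expert set" where
  "version_space n hs = foldl (update n) (extend (initial_guesses n)) hs"

definition halving_learner :: "nat \<Rightarrow> learner" where
  "halving_learner n hs = vote n (version_space n hs)"

definition num_counterexamples :: "history \<Rightarrow> nat" where
  "num_counterexamples hs = length (filter (\<lambda>a. a \<noteq> None) hs)"

definition num_learned :: "history \<Rightarrow> nat" where
  "num_learned hs = length (filter (\<lambda>a. a = None) hs)"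

lemma version_space_Nil [simp]: "version_space n [] = extend (initial_guesses n)"
  by (simp add: version_space_def)

lemma version_space_snoc [simp]: "version_space n (hs @ [a]) = update n (version_space n hs) a"
  by (simp add: version_space_def)

lemma finite_version_space: "finite (version_space n hs)"
proof (induction hs rule: rev_induct)
  case (snoc a hs)
  then show ?case by (cases a) (auto simp: finite_extend)
qed (simp add: finite_extend finite_initial_guesses)

lemma sum_weight_version_space:
  "sum (weight n) (version_space n hs) \<le> (1/2) ^ num_counterexamples hs"
proof (induction hs rule: rev_induct)
  case Nil
  show ?case
    by (simp add: num_counterexamples_def sum_weight_extend finite_initial_guesses
        sum_weight_initial_guesses)
next
  case (snoc a hs)
  let ?S = "version_space n hs"
  show ?case
  proof (cases a)
    case None
    have "sum (weight n) (version_space n (hs @ [a]))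
        = sum (weight n) {e\<in>?S. \<forall>x. length x = n \<longrightarrow> conj (target e) x = vote n ?S x}"
      using None by (simp add: sum_weight_extend finite_version_space)
    also have "\<dots> \<le> sum (weight n) ?S"
      by (rule sum_weight_mono) (auto simp: finite_version_space)
    finally show ?thesis
      using snoc None by (simp add: num_counterexamples_def)
  next
    case (Some x)
    have "sum (weight n) (version_space n (hs @ [a])) \<le> sum (weight n) ?S / 2"
      using sum_disagreeing_weighted_vote_le[OF finite_version_space] Some by simp
    then show ?thesis
      using snoc Some by (simp add: num_counterexamples_def)
  qed
qed

lemma drop_eq_ConsD:
  "drop i xs = y # ys \<Longrightarrow> i < length xs \<and> y = xs ! i \<and> ys = drop (Suc i) xs"
  by (metis Cons_nth_drop_Suc drop_all leI list.distinct(1) list.inject)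

lemma eq_run_history:
  "eq_run n L Ts rest hs q \<Longrightarrow>
     q = length hs \<and> num_learned hs \<le> length Ts \<and> rest = drop (num_learned hs) Ts"
proof (induction rule: eq_run.induct)
  case (correct T rest hs q)
  then have "num_learned hs < length Ts" "rest = drop (Suc (num_learned hs)) Ts"
    using drop_eq_ConsD by metis+
  with correct show ?case by (simp add: num_learned_def)
qed (auto simp: num_learned_def)

lemma target_true_expert:
  assumes "J c \<subseteq> {..<k}"
  shows "target (k, map M [0..<k], rev (map J [0..<Suc c])) = (\<Union>j\<in>J c. M j)"
  using assms by (auto simp: subset_iff)

lemma true_expert_in_version_space:
  assumes "1 \<le> k" "k \<le> n" "\<forall>i<k. M i \<subseteq> {..<n}"
    and J: "\<And>i. J i \<subseteq> {..<k}" "\<And>i. i < length Ts \<Longrightarrow> Ts ! i = (\<Union>j\<in>J i. M j)"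
  shows "eq_run n (halving_learner n) Ts rest hs q \<Longrightarrow>
    (k, map M [0..<k], rev (map J [0..<Suc (num_learned hs)])) \<in> version_space n hs"
proof (induction rule: eq_run.induct)
  case start
  have "(k, map M [0..<k], []) \<in> initial_guesses n"
    using assms(1-3) by (auto simp: initial_guesses_def)
  then show ?case
    using J(1) by (auto simp: extend_def num_learned_def)
next
  case (correct T rest hs q)
  let ?c = "num_learned hs"
  let ?e = "(k, map M [0..<k], rev (map J [0..<Suc ?c]))"
  have "drop ?c Ts = T # rest"
    using eq_run_history[OF correct.hyps(1)] by simp
  then have "target ?e = T"
    using J target_true_expert drop_eq_ConsD by metis
  then have "?e \<in> {e\<in>version_space n hs. \<forall>x. length x = n \<longrightarrow> conj (target e) x = vote n (version_space n hs) x}"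
    using correct.IH correct.hyps(2) by (simp add: halving_learner_def)
  then show ?case
    using J(1) by (auto simp: extend_def num_learned_def)
next
  case (counterex T rest hs q x)
  let ?c = "num_learned hs"
  let ?e = "(k, map M [0..<k], rev (map J [0..<Suc ?c]))"
  have "drop ?c Ts = T # rest"
    using eq_run_history[OF counterex.hyps(1)] by simp
  then have "target ?e = T"
    using J target_true_expert drop_eq_ConsD by metis
  then show ?case
    using counterex.IH counterex.hyps(3) by (simp add: halving_learner_def num_learned_def)
qed

lemma anchor_cond_le_card:
  assumes "anchor_cond k M" "\<forall>i<k. M i \<subseteq> {..<n}"
  shows "k \<le> n"
proof -
  obtain v where v: "\<forall>i<k. v i \<in> M i \<and> (\<forall>j<k. j \<noteq> i \<longrightarrow> v i \<notin> M j)"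
    using assms(1) unfolding anchor_cond_def by metis
  have "inj_on v {..<k}"
    unfolding inj_on_def using v by (metis lessThan_iff)
  moreover have "v ` {..<k} \<subseteq> {..<n}"
    using v assms(2) by auto
  ultimately show ?thesis
    using card_inj_on_le[of v "{..<k}" "{..<n}"] by simp
qed

lemma mistake_bound:
  assumes "e \<in> version_space n hs" "e = (k, Ms, Js)"
  shows "num_counterexamples hs \<le> k * (n + 1) + length Js * k"
proof -
  have "weight n e \<le> sum (weight n) (version_space n hs)"
    by (rule member_le_sum[OF assms(1) weight_nonneg finite_version_space])
  also have "\<dots> \<le> (1/2) ^ num_counterexamples hs"
    by (rule sum_weight_version_space)
  finally show ?thesis
    using assms(2) by (simp add: power_decreasing_iff)
qed

lemma query_bound_arith:
  fixes k n m c s :: nat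
  assumes "1 \<le> k" "k \<le> n" "c \<le> m" "s \<le> k * (n + 1) + Suc c * k"
  shows "s + c \<le> 3 * (m * k + n ^ 3)"
proof -
  have "s + c \<le> k * (n + 2) + c * k + c"
    using assms(4) by (simp add: algebra_simps)
  also have "\<dots> \<le> n * (n + 2) + 2 * (m * k)"
  proof -
    have "k * (n + 2) \<le> n * (n + 2)" "c * k \<le> m * k"
      using assms by (simp_all only: mult_le_mono1)
    moreover have "c \<le> m * k"
      using assms(1,3) by (metis le_trans mult.right_neutral mult_le_mono2)
    ultimately show ?thesis by linarith
  qed
  also have "n * (n + 2) \<le> 3 * n ^ 3"
  proof -
    have "n \<le> n * n" "n * n \<le> n * n * n"
      using assms(1,2) by simp_all
    then show ?thesis
      unfolding power3_eq_cube distrib_left by linarith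
  qed
  finally show ?thesis by simp
qed

theorem corollary1:
  "\<exists>(C::nat) (L :: nat \<Rightarrow> learner).
     \<forall>n k (M :: nat \<Rightarrow> nat set) (Ts :: nat set list).
       k \<ge> 1 \<longrightarrow>
       (\<forall>i<k. M i \<subseteq> {..<n}) \<longrightarrow>
       anchor_cond k M \<longrightarrow>
       (\<forall>T\<in>set Ts. \<exists>J\<subseteq>{..<k}. T = (\<Union>j\<in>J. M j)) \<longrightarrow>
       (\<forall>rest hs q. eq_run n (L n) Ts rest hs q \<longrightarrow>
          q \<le> C * (length Ts * k + n ^ 3))"
proof (intro exI[of _ 3] exI[of _ halving_learner] allI impI)
  fix n k M Ts rest hs q
  assume k: "1 \<le> k" and M: "\<forall>i<k. M i \<subseteq> {..<n}" and "anchor_cond k M"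
    and Ts: "\<forall>T\<in>set Ts. \<exists>J\<subseteq>{..<k}. T = (\<Union>j\<in>J. M j)"
    and run: "eq_run n (halving_learner n) Ts rest hs q"
  have kn: "k \<le> n"
    using anchor_cond_le_card[OF \<open>anchor_cond k M\<close> M] .
  have "\<exists>J'. J' \<subseteq> {..<k} \<and> (i < length Ts \<longrightarrow> Ts ! i = (\<Union>j\<in>J'. M j))" for i
    using Ts nth_mem by (cases "i < length Ts") auto
  then obtain J where J: "\<And>i. J i \<subseteq> {..<k}" "\<And>i. i < length Ts \<Longrightarrow> Ts ! i = (\<Union>j\<in>J i. M j)"
    by metis
  let ?c = "num_learned hs"
  have "num_counterexamples hs \<le> k * (n + 1) + Suc ?c * k"
    using mistake_bound[OF true_expert_in_version_space[OF k kn M J run] refl] by simp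
  moreover have "q = num_counterexamples hs + ?c" "?c \<le> length Ts"
    using eq_run_history[OF run] sum_length_filter_compl[of "\<lambda>a. a = None" hs]
    by (auto simp: num_counterexamples_def num_learned_def)
  ultimately show "q \<le> 3 * (length Ts * k + n ^ 3)"
    using query_bound_arith[OF k kn] by simp
qed

end
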